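(* Let $G>I$ be a finite group with $Z(G)=I$ and $(C_1,C_2,C_3)$ a class vector of $G$ with $l^i(C_1,C_2,C_3)>0$. Let $[\underline{\sigma}]=[\sigma_1,\sigma_2,\sigma_3]\in\Sigma^i(C_1,C_2,C_3)$ with $\sigma_1^4=\sigma_2^4=\iota$ and $G=\langle\sigma_1^{-2}\sigma_3\sigma_1^2,\sigma_1^{-1}\sigma_3\sigma_1,\sigma_3\rangle$, and let $C=C_3$. Then $$v=[\sigma_1^{-2}\sigma_3\sigma_1^2,\ \sigma_1^{-1}\sigma_3\sigma_1,\ \sigma_3,\ \sigma_1^{-3}\sigma_3\sigma_1^3]\in\Sigma^i(C,C,C,C)$$ and $v^{\alpha_{4,0}}=v$, where $\alpha_{4,0}=\beta_2\beta_3\beta_4$.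
   Context: $\iota$ is the identity and $I$ the trivial group. For conjugacy classes $C_1,\dots,C_m$, $\Sigma^i(C_1,\dots,C_m)$ is the set of $G$-conjugacy classes $[\sigma_1,\dots,\sigma_m]$ (simultaneous conjugation) of tuples with $\sigma_j\in C_j$, $\langle\sigma_1,\dots,\sigma_m\rangle=G$, $\sigma_1\cdots\sigma_m=\iota$, and $l^i(C_1,\dots,C_m)=|\Sigma^i(C_1,\dots,C_m)|$. The element $\alpha_{4,0}=\beta_2\beta_3\beta_4$ of the Hurwitz braid group $H_4$ acts by $[\sigma_1,\sigma_2,\sigma_3,\sigma_4]^{\alpha_{4,0}}=[\sigma_2,\sigma_3,\sigma_4,\sigma_1]$. *)

theory Defs
  imports "HOL-Algebra.Algebra"
begin

definition group_center :: "('a, 'b) monoid_scheme \<Rightarrow> 'a set" where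
  "group_center G = {z \<in> carrier G. \<forall>g \<in> carrier G. z \<otimes>\<^bsub>G\<^esub> g = g \<otimes>\<^bsub>G\<^esub> z}"

definition conj_class :: "('a, 'b) monoid_scheme \<Rightarrow> 'a \<Rightarrow> 'a set" where
  "conj_class G x = {inv\<^bsub>G\<^esub> g \<otimes>\<^bsub>G\<^esub> x \<otimes>\<^bsub>G\<^esub> g | g. g \<in> carrier G}"

definition is_conj_class :: "('a, 'b) monoid_scheme \<Rightarrow> 'a set \<Rightarrow> bool" where
  "is_conj_class G C \<longleftrightarrow> (\<exists>x \<in> carrier G. C = conj_class G x)"

definition tuple_conj :: "('a, 'b) monoid_scheme \<Rightarrow> 'a \<Rightarrow> 'a list \<Rightarrow> 'a list" where
  "tuple_conj G g xs = map (\<lambda>s. inv\<^bsub>G\<^esub> g \<otimes>\<^bsub>G\<^esub> s \<otimes>\<^bsub>G\<^esub> g) xs"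

definition tuple_class :: "('a, 'b) monoid_scheme \<Rightarrow> 'a list \<Rightarrow> 'a list set" where
  "tuple_class G xs = {tuple_conj G g xs | g. g \<in> carrier G}"

definition gprod :: "('a, 'b) monoid_scheme \<Rightarrow> 'a list \<Rightarrow> 'a" where
  "gprod G xs = foldr (\<lambda>a b. a \<otimes>\<^bsub>G\<^esub> b) xs \<one>\<^bsub>G\<^esub>"

definition admissible :: "('a, 'b) monoid_scheme \<Rightarrow> 'a set list \<Rightarrow> 'a list \<Rightarrow> bool" where
  "admissible G Cs xs \<longleftrightarrow>
     length xs = length Cs \<and> (\<forall>j < length xs. xs ! j \<in> Cs ! j)
     \<and> generate G (set xs) = carrier G \<and> gprod G xs = \<one>\<^bsub>G\<^esub>"

definition Sigma_i :: "('a, 'b) monoid_scheme \<Rightarrow> 'a set list \<Rightarrow> 'a list set set" where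
  "Sigma_i G Cs = tuple_class G ` {xs. admissible G Cs xs}"

definition l_i :: "('a, 'b) monoid_scheme \<Rightarrow> 'a set list \<Rightarrow> nat" where
  "l_i G Cs = card (Sigma_i G Cs)"

text \<open>Action of alpha_{4,0} = beta_2 beta_3 beta_4 on a class of 4-tuples:
  [s1,s2,s3,s4] maps to [s2,s3,s4,s1] (rotate1), applied to every representative.\<close>
definition alpha40_act :: "'a list set \<Rightarrow> 'a list set" where
  "alpha40_act K = rotate1 ` K"

end

theory Submission
  imports Defs
begin

(* Write a = s1 and c = s3. Since s1 s2 s3 = 1 we have s2 = (c a)^-1, so s2^4 = 1 gives
   (c a)^4 = 1, and with a^4 = 1 the product of the four entries of v collapses to
   a^-2 (c a)^4 a^2 = 1. Every entry of v is a conjugate of c, hence lies in C3, and the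
   entries generate G by hypothesis. Because a^4 = 1, conjugating v by a^-1 lowers every
   exponent by one modulo 4, which is exactly the cyclic shift effected by alpha_{4,0}; so
   alpha_{4,0} fixes the class [v]. *)


lemma (in group) is_conj_class_conj_closed:
  assumes "is_conj_class G C" "y \<in> C" "g \<in> carrier G"
  shows "inv g \<otimes> y \<otimes> g \<in> C"
proof -
  obtain x h where x: "x \<in> carrier G" "C = conj_class G x"
    and h: "h \<in> carrier G" "y = inv h \<otimes> x \<otimes> h"
    using assms(1,2) unfolding is_conj_class_def conj_class_def by auto
  have "inv g \<otimes> y \<otimes> g = inv (h \<otimes> g) \<otimes> x \<otimes> (h \<otimes> g)"
    using x h assms(3) by (simp add: inv_mult_group m_assoc)
  then show ?thesis
    unfolding x(2) conj_class_def using h(1) assms(3) by blast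
qed

lemma (in group) conjugation_group_hom:
  assumes "g \<in> carrier G"
  shows "group_hom G G (\<lambda>x. inv g \<otimes> x \<otimes> g)"
proof -
  have "inv g \<otimes> (x \<otimes> y) \<otimes> g = (inv g \<otimes> x \<otimes> g) \<otimes> (inv g \<otimes> y \<otimes> g)"
    if "x \<in> carrier G" "y \<in> carrier G" for x y
    using assms that by (simp add: m_assoc[symmetric]) (simp add: m_assoc)
  then show ?thesis
    using assms by (intro group_hom.intro group_hom_axioms.intro homI) (auto intro: group_axioms)
qed

lemma (in group) conjugation_image_carrier:
  assumes "g \<in> carrier G"
  shows "(\<lambda>x. inv g \<otimes> x \<otimes> g) ` carrier G = carrier G"
proof
  show "carrier G \<subseteq> (\<lambda>x. inv g \<otimes> x \<otimes> g) ` carrier G"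
  proof
    fix y assume "y \<in> carrier G"
    then have "y = inv g \<otimes> (g \<otimes> y \<otimes> inv g) \<otimes> g"
      using assms by (simp add: m_assoc[symmetric]) (simp add: m_assoc)
    then show "y \<in> (\<lambda>x. inv g \<otimes> x \<otimes> g) ` carrier G"
      using assms \<open>y \<in> carrier G\<close> by blast
  qed
qed (use assms in auto)

lemma (in group) generate_tuple_conj:
  assumes "generate G (set xs) = carrier G" "g \<in> carrier G"
  shows "generate G (set (tuple_conj G g xs)) = carrier G"
proof -
  have "set xs \<subseteq> carrier G"
    using assms(1) generate.incl[of _ "set xs" G] by blast
  then show ?thesis
    using group_hom.generate_img[OF conjugation_group_hom[OF assms(2)]] assms
    by (simp add: tuple_conj_def conjugation_image_carrier)
qed

lemma (in group) gprod_closed: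
  "set xs \<subseteq> carrier G \<Longrightarrow> gprod G xs \<in> carrier G"
  by (induction xs) (auto simp: gprod_def)

lemma (in group) gprod_tuple_conj:
  assumes "set xs \<subseteq> carrier G" "g \<in> carrier G"
  shows "gprod G (tuple_conj G g xs) = inv g \<otimes> gprod G xs \<otimes> g"
  using assms(1)
proof (induction xs)
  case Nil
  then show ?case
    using assms(2) by (simp add: gprod_def tuple_conj_def)
next
  case (Cons x xs)
  then have "gprod G xs \<in> carrier G"
    by (simp add: gprod_closed)
  with Cons assms(2) show ?case
    by (simp add: gprod_def tuple_conj_def m_assoc[symmetric]) (simp add: m_assoc)
qed

lemma (in group) admissible_tuple_conj:
  assumes "\<forall>C \<in> set Cs. is_conj_class G C" "admissible G Cs xs" "g \<in> carrier G"
  shows "admissible G Cs (tuple_conj G g xs)"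
proof -
  have "set xs \<subseteq> carrier G"
    using assms(2) generate.incl[of _ "set xs" G] unfolding admissible_def by blast
  then show ?thesis
    using assms is_conj_class_conj_closed generate_tuple_conj gprod_tuple_conj
    unfolding admissible_def tuple_conj_def
    by (auto simp: nth_mem)
qed

lemma (in group) admissible_if_tuple_class_in_Sigma_i:
  assumes "\<forall>C \<in> set Cs. is_conj_class G C" "tuple_class G ys \<in> Sigma_i G Cs"
    and "set ys \<subseteq> carrier G"
  shows "admissible G Cs ys"
proof -
  obtain xs where xs: "admissible G Cs xs" "tuple_class G ys = tuple_class G xs"
    using assms(2) unfolding Sigma_i_def by auto
  have "ys = tuple_conj G \<one> ys"
    using assms(3) by (induction ys) (auto simp: tuple_conj_def)
  then have "ys \<in> tuple_class G xs"
    using xs(2) unfolding tuple_class_def by auto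
  then show ?thesis
    using admissible_tuple_conj[OF assms(1) xs(1)] unfolding tuple_class_def by auto
qed

lemma (in group) tuple_conj_tuple_conj:
  assumes "set xs \<subseteq> carrier G" "g \<in> carrier G" "h \<in> carrier G"
  shows "tuple_conj G g (tuple_conj G h xs) = tuple_conj G (h \<otimes> g) xs"
  using assms unfolding tuple_conj_def
  by (auto simp: inv_mult_group m_assoc subset_iff)

lemma rotate1_tuple_conj: "rotate1 (tuple_conj G g xs) = tuple_conj G g (rotate1 xs)"
  unfolding tuple_conj_def by (cases xs) auto

lemma (in group) alpha40_act_tuple_class:
  assumes "set xs \<subseteq> carrier G" "g \<in> carrier G" "rotate1 xs = tuple_conj G g xs"
  shows "alpha40_act (tuple_class G xs) = tuple_class G xs"
proof -
  have rotate_conj: "rotate1 (tuple_conj G h xs) = tuple_conj G (g \<otimes> h) xs"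
    if "h \<in> carrier G" for h
    using assms that by (simp add: rotate1_tuple_conj tuple_conj_tuple_conj)
  have "tuple_conj G h xs = rotate1 (tuple_conj G (inv g \<otimes> h) xs)"
    if "h \<in> carrier G" for h
    using assms that by (simp add: rotate_conj m_assoc[symmetric])
  then have "tuple_class G xs \<subseteq> rotate1 ` tuple_class G xs"
    using assms(2) unfolding tuple_class_def by blast
  moreover have "rotate1 ` tuple_class G xs \<subseteq> tuple_class G xs"
    using assms(2) rotate_conj unfolding tuple_class_def by blast
  ultimately show ?thesis
    unfolding alpha40_act_def by blast
qed

lemma (in group) pow_eq_one_of_gprod3_eq_one:
  assumes "x \<in> carrier G" "y \<in> carrier G" "z \<in> carrier G"
    and "gprod G [x, y, z] = \<one>" "y [^] (n::nat) = \<one>"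
  shows "(z \<otimes> x) [^] n = \<one>"
proof -
  have "(y \<otimes> z) \<otimes> x = \<one>"
    using inv_comm[of x "y \<otimes> z"] assms(1-4) by (simp add: gprod_def)
  then have "inv (z \<otimes> x) = y"
    using assms(1-3) by (intro inv_equality) (simp_all add: m_assoc)
  then show ?thesis
    using assms by (metis inv_eq_1_iff m_closed nat_pow_closed nat_pow_inv)
qed

lemma (in group) inv_eq_pow_if_pow_Suc_eq_one:
  assumes "a \<in> carrier G" "a [^] Suc n = \<one>"
  shows "inv a = a [^] n"
  using assms by (intro inv_equality) simp_all

lemma (in group) pow4_eq_one_cancel:
  assumes "a \<in> carrier G" "a [^] (4::nat) = \<one>" "x \<in> carrier G"
  shows "a \<otimes> (a \<otimes> (a \<otimes> (a \<otimes> x))) = x"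
proof -
  have "a \<otimes> (a \<otimes> (a \<otimes> (a \<otimes> x))) = a [^] (4::nat) \<otimes> x"
    using assms(1,3) by (simp add: numeral_eq_Suc m_assoc)
  then show ?thesis
    using assms by simp
qed

lemma (in group) gprod_conjugates_eq_one:
  assumes a: "a \<in> carrier G" and c: "c \<in> carrier G"
    and a4: "a [^] (4::nat) = \<one>" and "(c \<otimes> a) [^] (4::nat) = \<one>"
  shows "gprod G [inv a [^] (2::nat) \<otimes> c \<otimes> a [^] (2::nat), inv a \<otimes> c \<otimes> a, c,
                  inv a [^] (3::nat) \<otimes> c \<otimes> a [^] (3::nat)] = \<one>"
proof -
  have inv_a: "inv a = a [^] (3::nat)"
    using assms by (intro inv_eq_pow_if_pow_Suc_eq_one) (simp_all add: numeral_eq_Suc)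
  have "gprod G [inv a [^] (2::nat) \<otimes> c \<otimes> a [^] (2::nat), inv a \<otimes> c \<otimes> a, c,
                  inv a [^] (3::nat) \<otimes> c \<otimes> a [^] (3::nat)]
     = inv a [^] (2::nat) \<otimes> (c \<otimes> a) [^] (4::nat) \<otimes> a [^] (2::nat)"
    using a c unfolding gprod_def inv_a
    by (simp add: numeral_eq_Suc m_assoc pow4_eq_one_cancel[OF a a4])
  also have "\<dots> = \<one>"
    using assms by (simp add: nat_pow_inv)
  finally show ?thesis .
qed

lemma (in group) rotate1_conjugates:
  assumes a: "a \<in> carrier G" and c: "c \<in> carrier G" and a4: "a [^] (4::nat) = \<one>"
  shows "rotate1 [inv a [^] (2::nat) \<otimes> c \<otimes> a [^] (2::nat), inv a \<otimes> c \<otimes> a, c,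
                  inv a [^] (3::nat) \<otimes> c \<otimes> a [^] (3::nat)]
       = tuple_conj G (inv a) [inv a [^] (2::nat) \<otimes> c \<otimes> a [^] (2::nat), inv a \<otimes> c \<otimes> a, c,
                  inv a [^] (3::nat) \<otimes> c \<otimes> a [^] (3::nat)]"
proof -
  have inv_a: "inv a = a [^] (3::nat)"
    using assms by (intro inv_eq_pow_if_pow_Suc_eq_one) (simp_all add: numeral_eq_Suc)
  show ?thesis
    using a c a4 unfolding tuple_conj_def inv_inv[OF a] unfolding inv_a
    by (simp add: numeral_eq_Suc m_assoc pow4_eq_one_cancel[OF a a4])
qed

theorem proposition8:
  fixes G (structure) and C1 C2 C3 :: "'a set" and s1 s2 s3 :: 'a
  assumes "group G" and "finite (carrier G)"
    and "carrier G \<noteq> {\<one>}"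
    and "group_center G = {\<one>}"
    and "is_conj_class G C1" and "is_conj_class G C2" and "is_conj_class G C3"
    and "l_i G [C1, C2, C3] > 0"
    and "s1 \<in> carrier G" and "s2 \<in> carrier G" and "s3 \<in> carrier G"
    and "tuple_class G [s1, s2, s3] \<in> Sigma_i G [C1, C2, C3]"
    and "s1 [^] (4::nat) = \<one>" and "s2 [^] (4::nat) = \<one>"
    and "carrier G = generate G {inv s1 [^] (2::nat) \<otimes> s3 \<otimes> s1 [^] (2::nat),
                                 inv s1 \<otimes> s3 \<otimes> s1, s3}"
  shows "tuple_class G [inv s1 [^] (2::nat) \<otimes> s3 \<otimes> s1 [^] (2::nat),
                        inv s1 \<otimes> s3 \<otimes> s1, s3,
                        inv s1 [^] (3::nat) \<otimes> s3 \<otimes> s1 [^] (3::nat)]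
           \<in> Sigma_i G [C3, C3, C3, C3]
       \<and> alpha40_act (tuple_class G [inv s1 [^] (2::nat) \<otimes> s3 \<otimes> s1 [^] (2::nat),
                        inv s1 \<otimes> s3 \<otimes> s1, s3,
                        inv s1 [^] (3::nat) \<otimes> s3 \<otimes> s1 [^] (3::nat)])
         = tuple_class G [inv s1 [^] (2::nat) \<otimes> s3 \<otimes> s1 [^] (2::nat),
                        inv s1 \<otimes> s3 \<otimes> s1, s3,
                        inv s1 [^] (3::nat) \<otimes> s3 \<otimes> s1 [^] (3::nat)]"
proof -
  interpret group G by fact
  let ?v = "[inv s1 [^] (2::nat) \<otimes> s3 \<otimes> s1 [^] (2::nat), inv s1 \<otimes> s3 \<otimes> s1, s3,
             inv s1 [^] (3::nat) \<otimes> s3 \<otimes> s1 [^] (3::nat)]"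
  have "admissible G [C1, C2, C3] [s1, s2, s3]"
    using assms(5-7,9-12) by (intro admissible_if_tuple_class_in_Sigma_i) auto
  then have s3: "s3 \<in> C3" and prod3: "gprod G [s1, s2, s3] = \<one>"
    unfolding admissible_def by auto
  have "(s3 \<otimes> s1) [^] (4::nat) = \<one>"
    using assms(9-11,14) prod3 by (intro pow_eq_one_of_gprod3_eq_one)
  then have "gprod G ?v = \<one>"
    using assms(9,11,13) by (intro gprod_conjugates_eq_one)
  moreover have "set ?v \<subseteq> C3"
    using assms(9) s3 is_conj_class_conj_closed[OF assms(7) s3] by (auto simp: nat_pow_inv)
  moreover have "generate G (set ?v) = carrier G"
  proof
    show "generate G (set ?v) \<subseteq> carrier G"
      using assms(9,11) by (intro generate_incl) auto
    show "carrier G \<subseteq> generate G (set ?v)"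
      by (subst assms(15)) (intro mono_generate, auto)
  qed
  ultimately have "tuple_class G ?v \<in> Sigma_i G [C3, C3, C3, C3]"
    unfolding Sigma_i_def admissible_def by (auto simp: nth_Cons')
  moreover have "alpha40_act (tuple_class G ?v) = tuple_class G ?v"
    using assms(9,11,13) rotate1_conjugates by (intro alpha40_act_tuple_class[of _ "inv s1"]) auto
  ultimately show ?thesis ..
qed

end
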